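(* Let $n\ge 4$ and let $W_n$ be the wheel graph on $n$ vertices, with incidence matrix \[M=\left[\begin{array}{c|c} \mathbf{1}^T & \mathbf{0}^T \\ \hline I_{n-1} & C \end{array}\right],\] where $C$ is the circulant matrix $\mathrm{circ}(1,0,\ldots,0,1)$ of order $n-1$. Then $CC^T+I_{n-1}$ is invertible and the Moore–Penrose inverse of $M$ is \[M^+=\frac{1}{2(n-1)} \left[\begin{array}{r|c} 2\mathbf{1} & X \\ \hline -\mathbf{1} & Y \end{array}\right],\] where $X=2(CC^T+I_{n-1})^{-1}\left[ (n-1)I_{n-1}-J_{n-1}\right]$ and $Y= J_{n-1}+C^TX$.
   Context: The wheel graph $W_n$ ($n\ge4$) is obtained from a cycle on $n-1$ vertices and an extra vertex $v$ by joining $v$ to every vertex of the cycle. The (vertex-edge) incidence matrix of a graph has $(i,j)$-entry $1$ if vertex $i$ is incident with edge $e_j$ and $0$ otherwise; the displayed block form corresponds to listing the hub $v$ first, then the cycle vertices $1,\dots,n-1$ in cyclic order, and listing the $n-1$ spokes first (spoke $j$ joining $v$ to cycle vertex $j$) followed by the cycle edges. For $c_0,\dots,c_{k-1}$, $\mathrm{circ}(c_0,c_1,\ldots,c_{k-1})$ denotes the $k\times k$ circulant matrix whose $(i,j)$-entry is $c_{(j-i)\bmod k}$ (first row $c_0,\dots,c_{k-1}$, each subsequent row the cyclic right shift of the previous). $\mathbf{1}$ is the all-ones column vector of length $n-1$, $\mathbf{0}$ the zero vector, $J_{n-1}$ the $(n-1)\times(n-1)$ all-ones matrix, $I_{n-1}$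 the identity. The Moore–Penrose inverse $A^+$ of a real matrix $A$ is the unique matrix satisfying $AA^+A=A$, $A^+AA^+=A^+$, $(AA^+)^T=AA^+$, $(A^+A)^T=A^+A$. *)

theory Defs
  imports "Jordan_Normal_Form.Matrix"
begin

definition circ_mat :: "'a list \<Rightarrow> 'a mat" where
  "circ_mat cs = mat (length cs) (length cs)
     (\<lambda>(i,j). cs ! ((j + length cs - i) mod length cs))"

text \<open>All-ones matrix of size r x c (J, or 1 / 1^T as column/row vectors).\<close>
definition ones_mat :: "nat \<Rightarrow> nat \<Rightarrow> 'a :: {zero,one} mat" where
  "ones_mat r c = mat r c (\<lambda>_. 1)"

definition mat_inv :: "'a :: semiring_1 mat \<Rightarrow> 'a mat" where
  "mat_inv A = (THE B. B \<in> carrier_mat (dim_row A) (dim_row A) \<and> inverts_mat A B \<and> inverts_mat B A)"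

definition is_MP_inverse :: "real mat \<Rightarrow> real mat \<Rightarrow> bool" where
  "is_MP_inverse A B \<longleftrightarrow> B \<in> carrier_mat (dim_col A) (dim_row A) \<and>
     A * B * A = A \<and> B * A * B = B \<and>
     transpose_mat (A * B) = A * B \<and> transpose_mat (B * A) = B * A"

definition MP_inverse :: "real mat \<Rightarrow> real mat" where
  "MP_inverse A = (THE B. is_MP_inverse A B)"

end

theory Submission
  imports Defs "Jordan_Normal_Form.Determinant"
begin

(* The first row of M is 1^T and the spokes contribute an identity block, so M has full row rank,
   and a right inverse R of M with R M symmetric is its Moore-Penrose inverse.  We take
   R = B / (2m), m = n - 1, where B is the block matrix of the statement.  Of the rim C only its
   row and column sums (all equal to 2) matter: they make the all-ones vector an eigenvector, with
   eigenvalue 5, of the positive definite matrix K = C C^T + I.  Hence X = 2m K^-1 - (2/5) J is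
   symmetric with vanishing column sums and X + C Y = 2m I, which gives M B = 2m I, while
   B M = [2J + X, X C; C^T X, 2J + C^T X C] is symmetric because X is. *)

lemma ones_mat_carrier [simp]: "ones_mat r c \<in> carrier_mat r c"
  by (simp add: ones_mat_def)

lemma dim_ones_mat [simp]: "dim_row (ones_mat r c) = r" "dim_col (ones_mat r c) = c"
  by (simp_all add: ones_mat_def)

lemma index_ones_mat [simp]: "i < r \<Longrightarrow> j < c \<Longrightarrow> ones_mat r c $$ (i, j) = 1"
  by (simp add: ones_mat_def)

lemma transpose_ones_mat [simp]: "transpose_mat (ones_mat r c) = ones_mat c r"
  by (rule eq_matI) auto

lemma transpose_smult_mat [simp]: "transpose_mat (c \<cdot>\<^sub>m A) = c \<cdot>\<^sub>m transpose_mat A"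
  by (rule eq_matI) auto

lemma ones_mat_mult_ones_mat:
  "ones_mat r k * ones_mat k c = (of_nat k :: 'a :: semiring_1) \<cdot>\<^sub>m ones_mat r c"
  by (rule eq_matI) (auto simp: scalar_prod_def)

lemma is_MP_inverse_mult_left_unique:
  assumes B: "is_MP_inverse A B" and D: "is_MP_inverse A D"
  shows "A * B = A * D"
proof -
  obtain r c where A: "A \<in> carrier_mat r c" by blast
  from B A have Bc: "B \<in> carrier_mat c r" and ABA: "A * B * A = A"
    and AB_sym: "transpose_mat (A * B) = A * B" by (auto simp: is_MP_inverse_def)
  from D A have Dc: "D \<in> carrier_mat c r" and ADA: "A * D * A = A"
    and AD_sym: "transpose_mat (A * D) = A * D" by (auto simp: is_MP_inverse_def)
  have AB: "A * B \<in> carrier_mat r r" and AD: "A * D \<in> carrier_mat r r" using A Bc Dc by auto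
  have "A * B = (A * D * A) * B" using ADA by simp
  also have "\<dots> = transpose_mat (A * D) * transpose_mat (A * B)"
    using assoc_mult_mat[OF AD A Bc] AD_sym AB_sym by simp
  also have "\<dots> = transpose_mat ((A * B * A) * D)"
    using transpose_mult[OF AB AD] assoc_mult_mat[OF AB A Dc] by simp
  finally show ?thesis using ABA AD_sym by simp
qed

lemma is_MP_inverse_mult_right_unique:
  assumes B: "is_MP_inverse A B" and D: "is_MP_inverse A D"
  shows "B * A = D * A"
proof -
  obtain r c where A: "A \<in> carrier_mat r c" by blast
  from B A have Bc: "B \<in> carrier_mat c r" and ABA: "A * B * A = A"
    and BA_sym: "transpose_mat (B * A) = B * A" by (auto simp: is_MP_inverse_def)
  from D A have Dc: "D \<in> carrier_mat c r" and ADA: "A * D * A = A"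
    and DA_sym: "transpose_mat (D * A) = D * A" by (auto simp: is_MP_inverse_def)
  have AB: "A * B \<in> carrier_mat r r" and AD: "A * D \<in> carrier_mat r r"
    and BA: "B * A \<in> carrier_mat c c" and DA: "D * A \<in> carrier_mat c c" using A Bc Dc by auto
  have "B * A = B * (A * D * A)" using ADA by simp
  also have "\<dots> = transpose_mat (B * A) * transpose_mat (D * A)"
    using assoc_mult_mat[OF Bc AD A] assoc_mult_mat[OF Bc A Dc] assoc_mult_mat[OF BA Dc A]
      BA_sym DA_sym by simp
  also have "\<dots> = transpose_mat (D * (A * B * A))"
    using transpose_mult[OF DA BA] assoc_mult_mat[OF DA Bc A] assoc_mult_mat[OF Dc A Bc]
      assoc_mult_mat[OF Dc AB A] by simp
  finally show ?thesis using ABA DA_sym by simp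
qed

lemma is_MP_inverse_unique:
  assumes B: "is_MP_inverse A B" and D: "is_MP_inverse A D"
  shows "B = D"
proof -
  obtain r c where A: "A \<in> carrier_mat r c" by blast
  from B D A have Bc: "B \<in> carrier_mat c r" and Dc: "D \<in> carrier_mat c r"
    and BAB: "B * A * B = B" and DAD: "D * A * D = D" by (auto simp: is_MP_inverse_def)
  have "B = B * (A * B)" using BAB assoc_mult_mat[OF Bc A Bc] by simp
  also have "\<dots> = (D * A) * D"
    using is_MP_inverse_mult_left_unique[OF B D] is_MP_inverse_mult_right_unique[OF B D]
      assoc_mult_mat[OF Bc A Dc] by simp
  finally show ?thesis using DAD by simp
qed

lemma MP_inverse_eqI: "is_MP_inverse A B \<Longrightarrow> MP_inverse A = B"
  unfolding MP_inverse_def using is_MP_inverse_unique by blast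

lemma is_MP_inverse_if_right_inverse:
  assumes B: "B \<in> carrier_mat (dim_col A) (dim_row A)" and AB: "A * B = 1\<^sub>m (dim_row A)"
    and BA_sym: "transpose_mat (B * A) = B * A"
  shows "is_MP_inverse A B"
proof -
  have "B * A * B = B"
    using AB assoc_mult_mat[OF B carrier_matI[of A] B] B by simp
  then show ?thesis using assms unfolding is_MP_inverse_def by simp
qed

lemma sum_list_rotate: "sum_list (rotate n xs) = (sum_list xs :: 'a :: comm_monoid_add)"
proof (induction n)
  case (Suc n)
  then show ?case by (cases "rotate n xs") (simp_all add: rotate1_rotate_swap add.commute)
qed simp

lemma sum_nth_rotate:
  "(\<Sum>j<length xs. xs ! ((m + j) mod length xs)) = (sum_list xs :: 'a :: comm_monoid_add)"
proof -
  have "(\<Sum>j<length xs. xs ! ((m + j) mod length xs)) = (\<Sum>j<length xs. rotate m xs ! j)"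
    by (simp add: nth_rotate)
  also have "\<dots> = sum_list (rotate m xs)"
    by (simp add: sum_list_sum_nth atLeast0LessThan)
  finally show ?thesis by (simp add: sum_list_rotate)
qed

lemma circ_mat_carrier: "circ_mat cs \<in> carrier_mat (length cs) (length cs)"
  by (simp add: circ_mat_def)

lemma circ_mat_row_sum:
  assumes "i < length cs"
  shows "(\<Sum>j<length cs. circ_mat cs $$ (i, j)) = sum_list cs"
proof -
  let ?k = "length cs"
  have "(\<Sum>j<?k. circ_mat cs $$ (i, j)) = (\<Sum>j<?k. cs ! ((?k - i + j) mod ?k))"
    using assms by (intro sum.cong) (auto simp: circ_mat_def add.commute)
  then show ?thesis by (simp add: sum_nth_rotate)
qed

lemma circ_mat_col_sum:
  assumes "j < length cs"
  shows "(\<Sum>i<length cs. circ_mat cs $$ (i, j)) = sum_list cs"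
proof -
  let ?k = "length cs"
  have "(\<Sum>i<?k. circ_mat cs $$ (i, j)) = (\<Sum>i<?k. circ_mat cs $$ (?k - Suc i, j))"
    by (rule sum.nat_diff_reindex[symmetric])
  also have "\<dots> = (\<Sum>i<?k. cs ! ((Suc j + i) mod ?k))"
    using assms by (intro sum.cong) (auto simp: circ_mat_def)
  also have "\<dots> = sum_list cs" by (rule sum_nth_rotate)
  finally show ?thesis .
qed

lemma circ_mat_mult_ones_mat:
  fixes cs :: "'a :: semiring_1 list"
  shows "circ_mat cs * ones_mat (length cs) k = sum_list cs \<cdot>\<^sub>m ones_mat (length cs) k"
  using circ_mat_carrier[of cs]
  by (intro eq_matI) (auto simp: scalar_prod_def circ_mat_row_sum atLeast0LessThan)

lemma ones_mat_mult_circ_mat: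
  fixes cs :: "'a :: semiring_1 list"
  shows "ones_mat k (length cs) * circ_mat cs = sum_list cs \<cdot>\<^sub>m ones_mat k (length cs)"
  using circ_mat_carrier[of cs]
  by (intro eq_matI) (auto simp: scalar_prod_def circ_mat_col_sum atLeast0LessThan)

lemma invertible_mat_if_det_nonzero:
  fixes A :: "'a :: field mat"
  assumes A: "A \<in> carrier_mat n n" and "det A \<noteq> 0"
  shows "invertible_mat A"
proof -
  from det_non_zero_imp_unit[OF assms, of undefined]
  obtain B where "B \<in> carrier_mat n n" "B * A = 1\<^sub>m n" "A * B = 1\<^sub>m n"
    unfolding Units_def ring_mat_def by auto
  then show ?thesis using A by (auto simp: invertible_mat_def inverts_mat_def)
qed

lemma invertible_mat_mult_transpose_add_one:
  fixes C :: "real mat"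
  assumes C: "C \<in> carrier_mat m k"
  shows "invertible_mat (C * transpose_mat C + 1\<^sub>m m)" (is "invertible_mat ?K")
proof (rule invertible_mat_if_det_nonzero)
  show K: "?K \<in> carrier_mat m m" using C by auto
  show "det ?K \<noteq> 0"
  proof
    assume "det ?K = 0"
    then obtain v where v: "v \<in> carrier_vec m" "v \<noteq> 0\<^sub>v m" "?K *\<^sub>v v = 0\<^sub>v m"
      using det_0_iff_vec_prod_zero[OF K] by auto
    define w where "w = transpose_mat C *\<^sub>v v"
    have w: "w \<in> carrier_vec k" using C v(1) by (simp add: w_def)
    have "0 = v \<bullet> (?K *\<^sub>v v)" using v by simp
    also have "\<dots> = v \<bullet> (C *\<^sub>v w) + v \<bullet> v"
      using C v(1) w
    by (simp add: w_def add_mult_distrib_mat_vec[of _ m m] assoc_mult_mat_vec[of _ m k]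
        scalar_prod_add_distrib[of _ m])
    also have "v \<bullet> (C *\<^sub>v w) = w \<bullet> w"
      using transpose_vec_mult_scalar[OF C w v(1)] by (simp add: w_def)
    finally have "w \<bullet> w + v \<bullet> v = 0" by simp
    moreover have "w \<bullet> w \<ge> 0" "v \<bullet> v \<ge> 0"
      using conjugate_square_ge_0_vec[of w] conjugate_square_ge_0_vec[of v] by simp_all
    ultimately have "v \<bullet> v = 0" by linarith
    then show False using conjugate_square_eq_0_vec[OF v(1)] v(2) by simp
  qed
qed

lemma mat_inv_is_inverse:
  fixes K :: "'a :: semiring_1 mat"
  assumes K: "K \<in> carrier_mat m m" and "invertible_mat K"
  shows "mat_inv K \<in> carrier_mat m m" "K * mat_inv K = 1\<^sub>m m" "mat_inv K * K = 1\<^sub>m m"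
proof -
  from assms obtain B where KB: "K * B = 1\<^sub>m m" and BK: "B * K = 1\<^sub>m (dim_row B)"
    unfolding invertible_mat_def inverts_mat_def by auto
  have B: "B \<in> carrier_mat m m"
    using K arg_cong[OF KB, of dim_col] arg_cong[OF BK, of dim_col] by auto
  have "mat_inv K = B"
    unfolding mat_inv_def
  proof (rule the_equality)
    fix B' assume "B' \<in> carrier_mat (dim_row K) (dim_row K) \<and> inverts_mat K B' \<and> inverts_mat B' K"
    then have B': "B' \<in> carrier_mat m m" and "B' * K = 1\<^sub>m m"
      using K by (auto simp: inverts_mat_def)
    then show "B' = B" using assoc_mult_mat[OF B' K B] KB B by simp
  qed (use K B KB BK in \<open>auto simp: inverts_mat_def\<close>)
  then show "mat_inv K \<in> carrier_mat m m" "K * mat_inv K = 1\<^sub>m m" "mat_inv K * K = 1\<^sub>m m"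
    using B KB BK by auto
qed

lemma transpose_mat_inv:
  fixes K :: "'a :: comm_ring_1 mat"
  assumes K: "K \<in> carrier_mat m m" "invertible_mat K" and K_sym: "transpose_mat K = K"
  shows "transpose_mat (mat_inv K) = mat_inv K"
proof -
  note Ki = mat_inv_is_inverse[OF K]
  have "transpose_mat (mat_inv K) * K = 1\<^sub>m m"
    using transpose_mult[OF K(1) Ki(1)] Ki(2) K_sym by simp
  then show ?thesis
    using assoc_mult_mat[of "transpose_mat (mat_inv K)" m m K m "mat_inv K"] Ki K(1) by simp
qed

lemma mat_inv_mult_eigen:
  fixes K :: "'a :: field mat"
  assumes K: "K \<in> carrier_mat m m" "invertible_mat K" and A: "A \<in> carrier_mat m k"
    and KA: "K * A = c \<cdot>\<^sub>m A" and c: "c \<noteq> 0"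
  shows "mat_inv K * A = (1 / c) \<cdot>\<^sub>m A"
proof -
  note Ki = mat_inv_is_inverse[OF K]
  have "c \<cdot>\<^sub>m (mat_inv K * A) = A"
    using assoc_mult_mat[OF Ki(1) K(1) A] Ki(3) KA mult_smult_distrib[OF Ki(1) A] A by simp
  moreover have "mat_inv K * A = (1 / c) \<cdot>\<^sub>m (c \<cdot>\<^sub>m (mat_inv K * A))"
    using c by (intro eq_matI) auto
  ultimately show ?thesis by simp
qed

lemma mult_mat_inv_eigen:
  fixes K :: "'a :: field mat"
  assumes K: "K \<in> carrier_mat m m" "invertible_mat K" and A: "A \<in> carrier_mat k m"
    and AK: "A * K = c \<cdot>\<^sub>m A" and c: "c \<noteq> 0"
  shows "A * mat_inv K = (1 / c) \<cdot>\<^sub>m A"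
proof -
  note Ki = mat_inv_is_inverse[OF K]
  have "c \<cdot>\<^sub>m (A * mat_inv K) = A"
    using assoc_mult_mat[OF A K(1) Ki(1)] Ki(2) AK mult_smult_assoc_mat[OF A Ki(1)] A by simp
  moreover have "A * mat_inv K = (1 / c) \<cdot>\<^sub>m (c \<cdot>\<^sub>m (A * mat_inv K))"
    using c by (intro eq_matI) auto
  ultimately show ?thesis by simp
qed

locale wheel_incidence =
  fixes C K X Y M :: "real mat" and m :: nat
  assumes C_carrier: "C \<in> carrier_mat m m"
    and C_mult_ones: "\<And>k. C * ones_mat m k = 2 \<cdot>\<^sub>m ones_mat m k"
    and ones_mult_C: "\<And>k. ones_mat k m * C = 2 \<cdot>\<^sub>m ones_mat k m"
    and K_def: "K = C * transpose_mat C + 1\<^sub>m m"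
    and X_def: "X = 2 \<cdot>\<^sub>m (mat_inv K * (of_nat m \<cdot>\<^sub>m 1\<^sub>m m - ones_mat m m))"
    and Y_def: "Y = ones_mat m m + transpose_mat C * X"
    and M_def: "M = four_block_mat (ones_mat 1 m) (0\<^sub>m 1 m) (1\<^sub>m m) C"
begin

abbreviation B :: "real mat" where "B \<equiv> four_block_mat (2 \<cdot>\<^sub>m ones_mat m 1) X (- ones_mat m 1) Y"

lemma transpose_C_carrier: "transpose_mat C \<in> carrier_mat m m"
  using C_carrier by simp

lemma transpose_C_mult_ones: "transpose_mat C * ones_mat m k = 2 \<cdot>\<^sub>m ones_mat m k"
  using transpose_mult[OF ones_mat_carrier C_carrier, of k] by (simp add: ones_mult_C)

lemma ones_mult_transpose_C: "ones_mat k m * transpose_mat C = 2 \<cdot>\<^sub>m ones_mat k m"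
  using transpose_mult[OF C_carrier ones_mat_carrier, of k] by (simp add: C_mult_ones)

lemma C_transpose_C_carrier: "C * transpose_mat C \<in> carrier_mat m m"
  using C_carrier by simp

lemma K_carrier: "K \<in> carrier_mat m m"
  using C_carrier by (simp add: K_def)

lemma K_invertible: "invertible_mat K"
  unfolding K_def by (rule invertible_mat_mult_transpose_add_one[OF C_carrier])

lemma K_symmetric: "transpose_mat K = K"
  unfolding K_def
  using transpose_add[OF C_transpose_C_carrier one_carrier_mat] transpose_mult[OF C_carrier transpose_C_carrier]
  by simp

lemma K_mult_ones: "K * ones_mat m k = 5 \<cdot>\<^sub>m ones_mat m k"
proof -
  have "K * ones_mat m k = C * (transpose_mat C * ones_mat m k) + ones_mat m k"
    using add_mult_distrib_mat[OF C_transpose_C_carrier one_carrier_mat ones_mat_carrier]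
      assoc_mult_mat[OF C_carrier transpose_C_carrier ones_mat_carrier] by (simp add: K_def)
  also have "C * (transpose_mat C * ones_mat m k) = 4 \<cdot>\<^sub>m ones_mat m k"
    unfolding transpose_C_mult_ones mult_smult_distrib[OF C_carrier ones_mat_carrier] C_mult_ones
    by (rule eq_matI) auto
  also have "4 \<cdot>\<^sub>m ones_mat m k + ones_mat m k = 5 \<cdot>\<^sub>m (ones_mat m k :: real mat)"
    by (rule eq_matI) auto
  finally show ?thesis .
qed

lemma ones_mult_K: "ones_mat k m * K = 5 \<cdot>\<^sub>m ones_mat k m"
proof -
  have "ones_mat k m * K = (ones_mat k m * C) * transpose_mat C + ones_mat k m"
    using mult_add_distrib_mat[OF ones_mat_carrier C_transpose_C_carrier one_carrier_mat]
      assoc_mult_mat[OF ones_mat_carrier C_carrier transpose_C_carrier] by (simp add: K_def)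
  also have "(ones_mat k m * C) * transpose_mat C = 4 \<cdot>\<^sub>m ones_mat k m"
    unfolding ones_mult_C mult_smult_assoc_mat[OF ones_mat_carrier transpose_C_carrier]
      ones_mult_transpose_C
    by (rule eq_matI) auto
  also have "4 \<cdot>\<^sub>m ones_mat k m + ones_mat k m = 5 \<cdot>\<^sub>m (ones_mat k m :: real mat)"
    by (rule eq_matI) auto
  finally show ?thesis .
qed

lemma mat_inv_K_carrier: "mat_inv K \<in> carrier_mat m m"
  using mat_inv_is_inverse[OF K_carrier K_invertible] by simp

lemma mat_inv_K_symmetric: "transpose_mat (mat_inv K) = mat_inv K"
  by (rule transpose_mat_inv[OF K_carrier K_invertible K_symmetric])

lemma mat_inv_K_mult_ones: "mat_inv K * ones_mat m k = (1 / 5) \<cdot>\<^sub>m ones_mat m k"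
  by (rule mat_inv_mult_eigen[OF K_carrier K_invertible ones_mat_carrier K_mult_ones]) simp

lemma ones_mult_mat_inv_K: "ones_mat k m * mat_inv K = (1 / 5) \<cdot>\<^sub>m ones_mat k m"
  by (rule mult_mat_inv_eigen[OF K_carrier K_invertible ones_mat_carrier ones_mult_K]) simp

lemma X_eq: "X = (2 * of_nat m) \<cdot>\<^sub>m mat_inv K - (2 / 5) \<cdot>\<^sub>m ones_mat m m"
proof -
  have "mat_inv K * (of_nat m \<cdot>\<^sub>m 1\<^sub>m m - ones_mat m m)
      = of_nat m \<cdot>\<^sub>m mat_inv K - (1 / 5) \<cdot>\<^sub>m ones_mat m m"
    using mult_minus_distrib_mat[OF mat_inv_K_carrier smult_carrier_mat ones_mat_carrier, OF one_carrier_mat]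
      mult_smult_distrib[OF mat_inv_K_carrier one_carrier_mat] mat_inv_K_carrier
    by (simp add: mat_inv_K_mult_ones)
  then show ?thesis unfolding X_def using mat_inv_K_carrier by (auto intro!: eq_matI)
qed

lemma X_carrier: "X \<in> carrier_mat m m"
  using mat_inv_K_carrier by (simp add: X_eq minus_carrier_mat)

lemma X_symmetric: "transpose_mat X = X"
  unfolding X_eq using mat_inv_K_carrier
  by (simp add: transpose_minus[of _ m m] mat_inv_K_symmetric)

lemma ones_mult_X: "ones_mat k m * X = 0\<^sub>m k m"
proof -
  have "ones_mat k m * X
      = (2 * of_nat m) \<cdot>\<^sub>m (ones_mat k m * mat_inv K) - (2 / 5) \<cdot>\<^sub>m (ones_mat k m * ones_mat m m)"
    unfolding X_eq using mat_inv_K_carrier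
    by (simp add: mult_minus_distrib_mat[of _ k m _ m] mult_smult_distrib[of _ k m _ m])
  then show ?thesis by (auto simp: ones_mult_mat_inv_K ones_mat_mult_ones_mat intro!: eq_matI)
qed

lemma K_mult_X: "K * X = 2 \<cdot>\<^sub>m (of_nat m \<cdot>\<^sub>m 1\<^sub>m m - ones_mat m m)"
proof -
  let ?P = "of_nat m \<cdot>\<^sub>m 1\<^sub>m m - ones_mat m m :: real mat"
  have P: "?P \<in> carrier_mat m m" by auto
  have "K * X = 2 \<cdot>\<^sub>m ((K * mat_inv K) * ?P)"
    unfolding X_def using mult_smult_distrib[OF K_carrier mult_carrier_mat[OF mat_inv_K_carrier P]]
      assoc_mult_mat[OF K_carrier mat_inv_K_carrier P] by simp
  then show ?thesis using mat_inv_is_inverse(2)[OF K_carrier K_invertible] P by simp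
qed

lemma X_add_C_mult_Y: "X + C * Y = (2 * of_nat m) \<cdot>\<^sub>m 1\<^sub>m m"
proof -
  have CY: "C * Y = 2 \<cdot>\<^sub>m ones_mat m m + (C * transpose_mat C) * X"
    unfolding Y_def
    using mult_add_distrib_mat[OF C_carrier ones_mat_carrier]
      assoc_mult_mat[OF C_carrier transpose_C_carrier X_carrier] transpose_C_carrier X_carrier
    by (simp add: C_mult_ones)
  have CCX: "(C * transpose_mat C) * X + X = 2 \<cdot>\<^sub>m (of_nat m \<cdot>\<^sub>m 1\<^sub>m m - ones_mat m m)"
    using K_mult_X add_mult_distrib_mat[OF C_transpose_C_carrier one_carrier_mat X_carrier]
    by (simp add: K_def left_mult_one_mat[OF X_carrier])
  have "(C * transpose_mat C * X) $$ (i, j) + X $$ (i, j)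
      = 2 * ((if i = j then of_nat m else 0) - 1)" if "i < m" "j < m" for i j
    using arg_cong[OF CCX, of "\<lambda>A. A $$ (i, j)"] that C_transpose_C_carrier X_carrier by simp
  then show ?thesis
    unfolding CY using C_transpose_C_carrier X_carrier by (auto simp: algebra_simps intro!: eq_matI)
qed

lemma Y_carrier: "Y \<in> carrier_mat m m"
  using transpose_C_carrier X_carrier by (simp add: Y_def)

lemma M_carrier: "M \<in> carrier_mat (1 + m) (m + m)"
  unfolding M_def by (rule four_block_carrier_mat) (auto simp: C_carrier)

lemma B_carrier: "B \<in> carrier_mat (m + m) (1 + m)"
  using X_carrier Y_carrier by auto

lemma M_mult_B: "M * B = (2 * of_nat m) \<cdot>\<^sub>m 1\<^sub>m (1 + m)"
proof -
  have "M * B = four_block_mat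
      (ones_mat 1 m * (2 \<cdot>\<^sub>m ones_mat m 1) + 0\<^sub>m 1 m * - ones_mat m 1)
      (ones_mat 1 m * X + 0\<^sub>m 1 m * Y)
      (1\<^sub>m m * (2 \<cdot>\<^sub>m ones_mat m 1) + C * - ones_mat m 1) (1\<^sub>m m * X + C * Y)"
    unfolding M_def using C_carrier X_carrier Y_carrier by (intro mult_four_block_mat) auto
  also have "\<dots> = four_block_mat ((2 * of_nat m) \<cdot>\<^sub>m 1\<^sub>m 1) (0\<^sub>m 1 m)
      (0\<^sub>m m 1) ((2 * of_nat m) \<cdot>\<^sub>m 1\<^sub>m m)"
  proof (rule cong_four_block_mat)
    show "ones_mat 1 m * (2 \<cdot>\<^sub>m ones_mat m 1) + 0\<^sub>m 1 m * - ones_mat m 1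
        = (2 * of_nat m) \<cdot>\<^sub>m (1\<^sub>m 1 :: real mat)"
      unfolding mult_smult_distrib[OF ones_mat_carrier ones_mat_carrier] ones_mat_mult_ones_mat
      by (rule eq_matI) auto
    show "ones_mat 1 m * X + 0\<^sub>m 1 m * Y = 0\<^sub>m 1 m"
      using Y_carrier by (simp add: ones_mult_X)
    show "1\<^sub>m m * (2 \<cdot>\<^sub>m ones_mat m 1) + C * - ones_mat m 1 = (0\<^sub>m m 1 :: real mat)"
      using uminus_mult_right_mat[of C "ones_mat m 1"] C_carrier
      by (auto simp: C_mult_ones intro!: eq_matI)
    show "1\<^sub>m m * X + C * Y = (2 * of_nat m) \<cdot>\<^sub>m 1\<^sub>m m"
      using X_add_C_mult_Y X_carrier by simp
  qed
  also have "\<dots> = (2 * of_nat m) \<cdot>\<^sub>m four_block_mat (1\<^sub>m 1) (0\<^sub>m 1 m) (0\<^sub>m m 1) (1\<^sub>m m)"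
    by (subst smult_four_block_mat[of _ 1 1 _ m _ m]) auto
  also have "\<dots> = (2 * of_nat m) \<cdot>\<^sub>m 1\<^sub>m (1 + m)" by simp
  finally show ?thesis .
qed

lemma B_mult_M: "B * M = four_block_mat (2 \<cdot>\<^sub>m ones_mat m m + X) (X * C)
    (transpose_mat C * X) (2 \<cdot>\<^sub>m ones_mat m m + transpose_mat C * X * C)"
proof -
  have "B * M = four_block_mat
      (2 \<cdot>\<^sub>m ones_mat m 1 * ones_mat 1 m + X * 1\<^sub>m m)
      (2 \<cdot>\<^sub>m ones_mat m 1 * 0\<^sub>m 1 m + X * C)
      (- ones_mat m 1 * ones_mat 1 m + Y * 1\<^sub>m m) (- ones_mat m 1 * 0\<^sub>m 1 m + Y * C)"
    unfolding M_def using C_carrier X_carrier Y_carrier by (intro mult_four_block_mat) auto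
  also have "\<dots> = four_block_mat (2 \<cdot>\<^sub>m ones_mat m m + X) (X * C)
      (transpose_mat C * X) (2 \<cdot>\<^sub>m ones_mat m m + transpose_mat C * X * C)"
  proof (rule cong_four_block_mat)
    show "2 \<cdot>\<^sub>m ones_mat m 1 * ones_mat 1 m + X * 1\<^sub>m m = 2 \<cdot>\<^sub>m ones_mat m m + X"
      unfolding mult_smult_assoc_mat[OF ones_mat_carrier ones_mat_carrier] ones_mat_mult_ones_mat
      using X_carrier by (auto intro!: eq_matI)
    show "2 \<cdot>\<^sub>m ones_mat m 1 * 0\<^sub>m 1 m + X * C = X * C"
      using X_carrier C_carrier by auto
    show "- ones_mat m 1 * ones_mat 1 m + Y * 1\<^sub>m m = transpose_mat C * X"
      unfolding uminus_mult_left_mat ones_mat_mult_ones_mat right_mult_one_mat[OF Y_carrier]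
      using mult_carrier_mat[OF transpose_C_carrier X_carrier] C_carrier X_carrier
      by (auto simp: Y_def ones_mat_mult_ones_mat intro!: eq_matI)
    show "- ones_mat m 1 * 0\<^sub>m 1 m + Y * C = 2 \<cdot>\<^sub>m ones_mat m m + transpose_mat C * X * C"
      unfolding Y_def
      using add_mult_distrib_mat[OF ones_mat_carrier mult_carrier_mat C_carrier, OF transpose_C_carrier X_carrier]
        C_carrier X_carrier by (simp add: ones_mult_C)
  qed
  finally show ?thesis .
qed

lemma B_mult_M_symmetric: "transpose_mat (B * M) = B * M"
proof -
  have CX: "transpose_mat C * X \<in> carrier_mat m m" and XC: "X * C \<in> carrier_mat m m"
    and CXC: "transpose_mat C * X * C \<in> carrier_mat m m"
    and JX: "2 \<cdot>\<^sub>m ones_mat m m + X \<in> carrier_mat m m"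
    and JCXC: "2 \<cdot>\<^sub>m ones_mat m m + transpose_mat C * X * C \<in> carrier_mat m m"
    using C_carrier X_carrier by auto
  have "transpose_mat (X * C) = transpose_mat C * X"
    using transpose_mult[OF X_carrier C_carrier] X_symmetric by simp
  moreover have "transpose_mat (transpose_mat C * X) = X * C"
    using transpose_mult[OF transpose_C_carrier X_carrier] X_symmetric by simp
  moreover have "transpose_mat (transpose_mat C * X * C) = transpose_mat C * X * C"
    using transpose_mult[OF CX C_carrier] transpose_mult[OF transpose_C_carrier X_carrier] X_symmetric
      assoc_mult_mat[OF transpose_C_carrier X_carrier C_carrier] by simp
  ultimately show ?thesis
    unfolding B_mult_M transpose_four_block_mat[OF JX XC CX JCXC] using X_carrier CXC
    by (simp add: transpose_add[of _ m m] X_symmetric)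
qed

lemma MP_inverse_M:
  assumes "m > 0"
  shows "MP_inverse M = (1 / (2 * of_nat m)) \<cdot>\<^sub>m B"
proof (rule MP_inverse_eqI, rule is_MP_inverse_if_right_inverse)
  show "(1 / (2 * of_nat m)) \<cdot>\<^sub>m B \<in> carrier_mat (dim_col M) (dim_row M)"
    using B_carrier M_carrier by auto
  show "M * ((1 / (2 * of_nat m)) \<cdot>\<^sub>m B) = 1\<^sub>m (dim_row M)"
    unfolding mult_smult_distrib[OF M_carrier B_carrier] M_mult_B
    using assms M_carrier by (auto intro!: eq_matI)
  show "transpose_mat ((1 / (2 * of_nat m)) \<cdot>\<^sub>m B * M) = (1 / (2 * of_nat m)) \<cdot>\<^sub>m B * M"
    unfolding mult_smult_assoc_mat[OF B_carrier M_carrier] using B_mult_M_symmetric by simp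
qed

end

theorem mainTheorem1:
  fixes n :: nat
  assumes "n \<ge> 4"
  defines "C \<equiv> (circ_mat ([1] @ replicate (n - 3) 0 @ [1]) :: real mat)"
  defines "M \<equiv> four_block_mat (ones_mat 1 (n - 1)) (0\<^sub>m 1 (n - 1)) (1\<^sub>m (n - 1)) C"
  defines "K \<equiv> C * transpose_mat C + 1\<^sub>m (n - 1)"
  defines "X \<equiv> 2 \<cdot>\<^sub>m (mat_inv K * (of_nat (n - 1) \<cdot>\<^sub>m 1\<^sub>m (n - 1) - ones_mat (n - 1) (n - 1)))"
  defines "Y \<equiv> ones_mat (n - 1) (n - 1) + transpose_mat C * X"
  shows "invertible_mat K \<and>
         MP_inverse M = (1 / (2 * of_nat (n - 1))) \<cdot>\<^sub>m
           four_block_mat (2 \<cdot>\<^sub>m ones_mat (n - 1) 1) X (- ones_mat (n - 1) 1) Y"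
proof -
  let ?cs = "[1] @ replicate (n - 3) 0 @ [1 :: real]"
  have length_cs: "length ?cs = n - 1" and sum_cs: "sum_list ?cs = 2"
    using assms(1) by (auto simp: sum_list_replicate)
  interpret wheel_incidence C K X Y M "n - 1"
  proof
    show "C \<in> carrier_mat (n - 1) (n - 1)"
      using circ_mat_carrier[of ?cs] unfolding C_def length_cs .
    show "C * ones_mat (n - 1) k = 2 \<cdot>\<^sub>m ones_mat (n - 1) k" for k
      using circ_mat_mult_ones_mat[of ?cs k] unfolding C_def length_cs sum_cs .
    show "ones_mat k (n - 1) * C = 2 \<cdot>\<^sub>m ones_mat k (n - 1)" for k
      using ones_mat_mult_circ_mat[of k ?cs] unfolding C_def length_cs sum_cs .
  qed (simp_all add: K_def X_def Y_def M_def)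
  show ?thesis
    using K_invertible MP_inverse_M assms(1) by simp
qed

end
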